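(* Let $\kappa$ be a kernel on $\mathbb{R}^d$ and $\psi$ a feature map such that, for a probability density $p$, $\kappa(\mathbf{x},\mathbf{x}')=\int\psi(\mathbf{x},\mathbf{v})\psi(\mathbf{x}',\mathbf{v})p(\mathbf{v})\,d\mathbf{v}$ for all $\mathbf{x},\mathbf{x}'$, and $\psi^2(\cdot\,;\cdot)\le b$ almost surely for some constant $b>0$. Fix points $\mathbf{x}_1,\dots,\mathbf{x}_n,\mathbf{x}'\in\mathbb{R}^d$ and let $\mathcal{V}_s=\{\mathbf{v}_1,\dots,\mathbf{v}_s\}$ be i.i.d. with density $p$. Then $$\mathbb{E}_{\mathcal{V}_s}\big[(\tilde{\mathbf{k}}'-\mathbf{k}')(\tilde{\mathbf{k}}'-\mathbf{k}')^T\big]\ \preceq\ \frac{b}{s}\mathbf{K}-\frac{1}{s}\mathbf{k}'\mathbf{k}'^T.$$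
   Context: $\boldsymbol{\psi}(\mathbf{x};\mathcal{V}_s)=\frac{1}{\sqrt{s}}[\psi(\mathbf{x};\mathbf{v}_1),\dots,\psi(\mathbf{x};\mathbf{v}_s)]^T\in\mathbb{R}^s$; $\boldsymbol{\Psi}\in\mathbb{R}^{n\times s}$ has $i$-th row $\boldsymbol{\psi}(\mathbf{x}_i;\mathcal{V}_s)^T$. $\mathbf{K}\in\mathbb{R}^{n\times n}$ has entries $K_{ij}=\kappa(\mathbf{x}_i,\mathbf{x}_j)$; $\mathbf{k}'\in\mathbb{R}^n$ has entries $k'_i=\kappa(\mathbf{x}_i,\mathbf{x}')$; $\tilde{\mathbf{k}}'=\boldsymbol{\Psi}\,\boldsymbol{\psi}(\mathbf{x}';\mathcal{V}_s)\in\mathbb{R}^n$, i.e. $\tilde k'_i=\boldsymbol{\psi}(\mathbf{x}_i;\mathcal{V}_s)^T\boldsymbol{\psi}(\mathbf{x}';\mathcal{V}_s)$. $\preceq$ is the Loewner order. *)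

theory Defs
  imports "HOL-Probability.Probability"
begin

definition loewner_le :: "real^'n^'n \<Rightarrow> real^'n^'n \<Rightarrow> bool" where
  "loewner_le A B \<longleftrightarrow> (\<forall>z::real^'n. 0 \<le> z \<bullet> ((B - A) *v z))"

definition gram_mat :: "('a \<Rightarrow> 'a \<Rightarrow> real) \<Rightarrow> ('n::finite \<Rightarrow> 'a) \<Rightarrow> real^'n^'n" where
  "gram_mat \<kappa> xs = (\<chi> i j. \<kappa> (xs i) (xs j))"

definition kvec :: "('a \<Rightarrow> 'a \<Rightarrow> real) \<Rightarrow> ('n::finite \<Rightarrow> 'a) \<Rightarrow> 'a \<Rightarrow> real^'n" where
  "kvec \<kappa> xs x' = (\<chi> i. \<kappa> (xs i) x')"

text \<open>Random-feature approximation tilde k' = Psi psi(x';V_s), for features V_0..V_(s-1):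
  tilde k'_i = (1/s) * sum_l psi(x_i, v_l) psi(x', v_l).\<close>
definition rf_kvec :: "('a \<Rightarrow> 'v \<Rightarrow> real) \<Rightarrow> nat \<Rightarrow> ('n::finite \<Rightarrow> 'a) \<Rightarrow> 'a \<Rightarrow> (nat \<Rightarrow> 'v) \<Rightarrow> real^'n" where
  "rf_kvec \<psi> s xs x' V = (\<chi> i. (\<Sum>l<s. (1 / sqrt (real s) * \<psi> (xs i) (V l)) * (1 / sqrt (real s) * \<psi> x' (V l))))"

definition outer :: "real^'n \<Rightarrow> real^'n \<Rightarrow> real^'n^'n" where
  "outer u w = (\<chi> i j. u $ i * w $ j)"

end

theory Submission
  imports Defs
begin

text \<open>Write \<open>a\<^sub>i(v) = \<psi>(x\<^sub>i, v) \<psi>(x', v)\<close>. Each entry of the error of the random-feature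
  estimate of \<open>k'\<close> is the centred sample mean of \<open>a\<^sub>i\<close> over \<open>s\<close> i.i.d. features, so the
  expected outer product is \<open>1/s\<close> times the covariance \<open>E[a a\<^sup>T] - k' k'\<^sup>T\<close>. It remains to see
  \<open>E[a a\<^sup>T] \<preceq> b K\<close>: the quadratic form of \<open>b K - E[a a\<^sup>T]\<close> at \<open>z\<close> is
  \<open>E[(\<Sum>\<^sub>i z\<^sub>i \<psi>(x\<^sub>i, v))\<^sup>2 (b - \<psi>(x', v)\<^sup>2)]\<close>, which is nonnegative because \<open>\<psi>\<^sup>2 \<le> b\<close>.\<close>

lemma integral_PiM_coordinates_mult:
  fixes f g :: "'v \<Rightarrow> real"
  assumes M: "prob_space M" and I: "finite I" "l \<in> I" "m \<in> I"
    and f: "integrable M f" and g: "integrable M g" and fg: "integrable M (\<lambda>v. f v * g v)"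
  shows "integrable (PiM I (\<lambda>_. M)) (\<lambda>V. f (V l) * g (V m))"
    and "(\<integral>V. f (V l) * g (V m) \<partial>PiM I (\<lambda>_. M)) =
         (if l = m then \<integral>v. f v * g v \<partial>M else integral\<^sup>L M f * integral\<^sup>L M g)"
proof -
  interpret product_prob_space "\<lambda>_. M" using M by (rule product_prob_spaceI)
  \<comment> \<open>the factor of coordinate \<open>i\<close>, turning \<open>f (V l) * g (V m)\<close> into a product over coordinates\<close>
  define F where "F i v = (if i = l then f v else 1) * (if i = m then g v else 1)" for i v
  have F_integrable: "integrable M (F i)" for i
    unfolding F_def using f g fg by (cases "i = l"; cases "i = m") auto
  have F_prod: "(\<Prod>i\<in>I. F i (V i)) = f (V l) * g (V m)" for V
    using I by (simp add: F_def prod.distrib prod.delta)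
  show "integrable (PiM I (\<lambda>_. M)) (\<lambda>V. f (V l) * g (V m))"
    using product_integrable_prod[of I F] I(1) F_integrable by (simp add: F_prod)
  have "(\<integral>V. f (V l) * g (V m) \<partial>PiM I (\<lambda>_. M)) = (\<Prod>i\<in>I. integral\<^sup>L M (F i))"
    using product_integral_prod[of I F] I(1) F_integrable by (simp add: F_prod)
  also have "\<dots> = (if l = m then \<integral>v. f v * g v \<partial>M else integral\<^sup>L M f * integral\<^sup>L M g)"
  proof (cases "l = m")
    case True
    then have "integral\<^sup>L M (F i) = (if i = l then \<integral>v. f v * g v \<partial>M else 1)" for i
      unfolding F_def by (simp add: prob_space.prob_space[OF M])
    with True I show ?thesis by (simp add: prod.delta)
  next
    case False
    then have "integral\<^sup>L M (F i) = (if i = l then integral\<^sup>L M f else 1) * (if i = m then integral\<^sup>L M g else 1)" for i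
      unfolding F_def by (simp add: prob_space.prob_space[OF M])
    with False I show ?thesis by (simp add: prod.distrib prod.delta)
  qed
  finally show "(\<integral>V. f (V l) * g (V m) \<partial>PiM I (\<lambda>_. M)) =
         (if l = m then \<integral>v. f v * g v \<partial>M else integral\<^sup>L M f * integral\<^sup>L M g)" .
qed

lemma integral_sample_means_centered_mult:
  fixes f g :: "'v \<Rightarrow> real"
  assumes M: "prob_space M" and s: "s > 0"
    and f: "integrable M f" and g: "integrable M g" and fg: "integrable M (\<lambda>v. f v * g v)"
  shows "(\<integral>V. ((1 / real s) * (\<Sum>l<s. f (V l) - integral\<^sup>L M f)) *
                ((1 / real s) * (\<Sum>m<s. g (V m) - integral\<^sup>L M g)) \<partial>PiM {..<s} (\<lambda>_. M))
         = (1 / real s) * ((\<integral>v. f v * g v \<partial>M) - integral\<^sup>L M f * integral\<^sup>L M g)"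
proof -
  interpret prob_space M by (rule M)
  define f\<^sub>0 where "f\<^sub>0 = (\<lambda>v. f v - integral\<^sup>L M f)"
  define g\<^sub>0 where "g\<^sub>0 = (\<lambda>v. g v - integral\<^sup>L M g)"
  define c where "c = (\<integral>v. f v * g v \<partial>M) - integral\<^sup>L M f * integral\<^sup>L M g"
  have fg_expand: "(\<lambda>v. f\<^sub>0 v * g\<^sub>0 v) = (\<lambda>v. f v * g v - integral\<^sup>L M g * f v
      - integral\<^sup>L M f * g v + integral\<^sup>L M f * integral\<^sup>L M g)"
    by (simp add: f\<^sub>0_def g\<^sub>0_def algebra_simps)
  have centered: "integrable M f\<^sub>0" "integrable M g\<^sub>0" "integrable M (\<lambda>v. f\<^sub>0 v * g\<^sub>0 v)"
    "integral\<^sup>L M f\<^sub>0 = 0" "(\<integral>v. f\<^sub>0 v * g\<^sub>0 v \<partial>M) = c"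
    unfolding fg_expand using f g fg by (simp_all add: f\<^sub>0_def g\<^sub>0_def c_def prob_space)
  have term_integrable: "integrable (PiM {..<s} (\<lambda>_. M)) (\<lambda>V. f\<^sub>0 (V l) * g\<^sub>0 (V m))"
    and term_integral: "(\<integral>V. f\<^sub>0 (V l) * g\<^sub>0 (V m) \<partial>PiM {..<s} (\<lambda>_. M)) = (if l = m then c else 0)"
    if "l < s" "m < s" for l m
    using integral_PiM_coordinates_mult[OF M _ _ _ centered(1-3), of "{..<s}" l m] that centered(4,5)
    by auto
  have "(\<integral>V. ((1 / real s) * (\<Sum>l<s. f\<^sub>0 (V l))) * ((1 / real s) * (\<Sum>m<s. g\<^sub>0 (V m))) \<partial>PiM {..<s} (\<lambda>_. M))
      = (\<integral>V. (\<Sum>l<s. \<Sum>m<s. f\<^sub>0 (V l) * g\<^sub>0 (V m)) \<partial>PiM {..<s} (\<lambda>_. M)) / real s ^ 2"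
    by (simp add: sum_product power2_eq_square)
  also have "\<dots> = (\<Sum>l<s. \<Sum>m<s. \<integral>V. f\<^sub>0 (V l) * g\<^sub>0 (V m) \<partial>PiM {..<s} (\<lambda>_. M)) / real s ^ 2"
    using term_integrable
    by (subst Bochner_Integration.integral_sum) (auto intro!: Bochner_Integration.integrable_sum
        Bochner_Integration.integral_sum sum.cong)
  also have "\<dots> = (\<Sum>l<s. \<Sum>m<s. if l = m then c else 0) / real s ^ 2"
    by (simp add: term_integral)
  also have "\<dots> = c / real s"
    using s by (simp add: power2_eq_square)
  finally show ?thesis
    by (simp add: f\<^sub>0_def g\<^sub>0_def c_def)
qed

lemma (in finite_measure) integrable_mult_of_AE_square_le:
  fixes f g :: "'a \<Rightarrow> real"
  assumes [measurable]: "f \<in> borel_measurable M" "g \<in> borel_measurable M"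
    and "AE x in M. (f x)\<^sup>2 \<le> c" and "AE x in M. (g x)\<^sup>2 \<le> d"
  shows "integrable M (\<lambda>x. f x * g x)"
proof (rule integrable_const_bound[where B = "(c + d) / 2"])
  show "AE x in M. norm (f x * g x) \<le> (c + d) / 2"
    using assms(3,4)
  proof eventually_elim
    case (elim x)
    have "2 * \<bar>f x\<bar> * \<bar>g x\<bar> \<le> (f x)\<^sup>2 + (g x)\<^sup>2"
      using sum_squares_bound[of "\<bar>f x\<bar>" "\<bar>g x\<bar>"] by simp
    with elim show ?case by (simp add: abs_mult)
  qed
qed simp

lemma loewner_le_second_moments:
  fixes u :: "'n::finite \<Rightarrow> 'v \<Rightarrow> real" and w :: "'v \<Rightarrow> real"
  assumes u_integrable: "\<And>i j. integrable M (\<lambda>v. u i v * u j v)"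
    and uw_integrable: "\<And>i j. integrable M (\<lambda>v. u i v * w v * (u j v * w v))"
    and w_bound: "AE v in M. (w v)\<^sup>2 \<le> b"
  shows "loewner_le (\<chi> i j. \<integral>v. u i v * w v * (u j v * w v) \<partial>M) (b *\<^sub>R (\<chi> i j. \<integral>v. u i v * u j v \<partial>M))"
  unfolding loewner_le_def
proof
  fix z :: "real^'n"
  define G where "G i j v = b * (u i v * u j v) - u i v * w v * (u j v * w v)" for i j v
  have G_integrable: "integrable M (G i j)" for i j
    unfolding G_def using u_integrable uw_integrable by simp
  have G_quadratic_form: "(\<Sum>i\<in>UNIV. \<Sum>j\<in>UNIV. z $ i * z $ j * G i j v)
      = (\<Sum>i\<in>UNIV. z $ i * u i v)\<^sup>2 * (b - (w v)\<^sup>2)" for v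
    by (simp add: G_def power2_eq_square sum_product sum_distrib_right sum_distrib_left algebra_simps)
  have "z \<bullet> ((b *\<^sub>R (\<chi> i j. \<integral>v. u i v * u j v \<partial>M) - (\<chi> i j. \<integral>v. u i v * w v * (u j v * w v) \<partial>M)) *v z)
      = (\<Sum>i\<in>UNIV. \<Sum>j\<in>UNIV. z $ i * z $ j * integral\<^sup>L M (G i j))"
    unfolding inner_vec_def matrix_vector_mult_def G_def
    using u_integrable uw_integrable by (simp add: sum_distrib_left algebra_simps)
  also have "\<dots> = (\<integral>v. (\<Sum>i\<in>UNIV. z $ i * u i v)\<^sup>2 * (b - (w v)\<^sup>2) \<partial>M)"
    using G_integrable
    by (simp add: G_quadratic_form[symmetric] Bochner_Integration.integral_sum Bochner_Integration.integrable_sum)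
  also have "\<dots> \<ge> 0"
    using w_bound by (intro integral_nonneg_AE) (auto elim!: eventually_mono)
  finally show "0 \<le> z \<bullet> ((b *\<^sub>R (\<chi> i j. \<integral>v. u i v * u j v \<partial>M) - (\<chi> i j. \<integral>v. u i v * w v * (u j v * w v) \<partial>M)) *v z)" .
qed

lemma loewner_le_scaleR_diff:
  fixes A B D :: "real^'n::finite^'n"
  assumes "loewner_le A B" and "0 \<le> c"
  shows "loewner_le (c *\<^sub>R (A - D)) (c *\<^sub>R (B - D))"
  unfolding loewner_le_def
proof
  fix z :: "real^'n"
  have "c *\<^sub>R (B - D) - c *\<^sub>R (A - D) = c *\<^sub>R (B - A)"
    by (simp add: algebra_simps)
  moreover have "(c *\<^sub>R (B - A)) *v z = c *\<^sub>R ((B - A) *v z)"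
    by (simp add: matrix_vector_mult_def vec_eq_iff sum_distrib_left mult.assoc)
  ultimately show "0 \<le> z \<bullet> ((c *\<^sub>R (B - D) - c *\<^sub>R (A - D)) *v z)"
    using assms unfolding loewner_le_def by simp
qed

lemma rf_kvec_nth:
  "rf_kvec \<psi> s xs x' V $ i = (1 / real s) * (\<Sum>l<s. \<psi> (xs i) (V l) * \<psi> x' (V l))"
  unfolding rf_kvec_def
  by (simp add: sum_distrib_left algebra_simps real_sqrt_mult[symmetric])

lemma rf_kvec_deviation_second_moment:
  fixes \<psi> :: "'a \<Rightarrow> 'v \<Rightarrow> real" and xs :: "'n::finite \<Rightarrow> 'a"
  assumes M: "prob_space M" and s: "s > 0"
    and kernel: "\<And>x y. \<kappa> x y = (\<integral>v. \<psi> x v * \<psi> y v \<partial>M)"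
    and integrable: "\<And>i. integrable M (\<lambda>v. \<psi> (xs i) v * \<psi> x' v)"
    and integrable_mult: "\<And>i j. integrable M (\<lambda>v. \<psi> (xs i) v * \<psi> x' v * (\<psi> (xs j) v * \<psi> x' v))"
  shows "(\<chi> i j. \<integral>V. outer (rf_kvec \<psi> s xs x' V - kvec \<kappa> xs x') (rf_kvec \<psi> s xs x' V - kvec \<kappa> xs x') $ i $ j
            \<partial>PiM {..<s} (\<lambda>_. M))
    = (1 / real s) *\<^sub>R ((\<chi> i j. \<integral>v. \<psi> (xs i) v * \<psi> x' v * (\<psi> (xs j) v * \<psi> x' v) \<partial>M)
                        - outer (kvec \<kappa> xs x') (kvec \<kappa> xs x'))"
proof -
  define a where "a i = (\<lambda>v. \<psi> (xs i) v * \<psi> x' v)" for i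
  have kvec_nth: "kvec \<kappa> xs x' $ i = integral\<^sup>L M (a i)" for i
    by (simp add: kvec_def a_def kernel)
  have deviation: "(rf_kvec \<psi> s xs x' V - kvec \<kappa> xs x') $ i
      = (1 / real s) * (\<Sum>l<s. a i (V l) - integral\<^sup>L M (a i))" for V i
    using s by (simp add: rf_kvec_nth kvec_nth a_def sum_subtractf algebra_simps)
  have a_integrable: "integrable M (a i)" "integrable M (\<lambda>v. a i v * a j v)" for i j
    using integrable integrable_mult by (simp_all add: a_def)
  show ?thesis
    unfolding outer_def deviation kvec_nth
    using integral_sample_means_centered_mult[OF M s a_integrable(1,1,2)]
    by (simp add: vec_eq_iff a_def)
qed

theorem lemma8:
  fixes \<kappa> :: "real^'d \<Rightarrow> real^'d \<Rightarrow> real"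
    and \<psi> :: "real^'d \<Rightarrow> real^'d \<Rightarrow> real"
    and p :: "real^'d \<Rightarrow> real"
    and b :: real and s :: nat
    and xs :: "'n::finite \<Rightarrow> real^'d" and x' :: "real^'d"
  assumes p_meas: "p \<in> borel_measurable lborel"
    and p_nonneg: "\<forall>v. 0 \<le> p v"
    and p_prob: "prob_space (density lborel (\<lambda>v. ennreal (p v)))"
    and psi_meas: "\<forall>x. \<psi> x \<in> borel_measurable lborel"
    and kernel: "\<forall>x y. \<kappa> x y = (\<integral>v. \<psi> x v * \<psi> y v * p v \<partial>lborel)"
    and b_pos: "b > 0"
    and bound: "\<forall>x. AE v in density lborel (\<lambda>v. ennreal (p v)). (\<psi> x v)\<^sup>2 \<le> b"
    and s_pos: "s > 0"
  shows "loewner_le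
     (\<chi> i j. \<integral>V. outer (rf_kvec \<psi> s xs x' V - kvec \<kappa> xs x') (rf_kvec \<psi> s xs x' V - kvec \<kappa> xs x') $ i $ j
              \<partial>(PiM {..<s} (\<lambda>_. density lborel (\<lambda>v. ennreal (p v)))))
     ((b / real s) *\<^sub>R gram_mat \<kappa> xs - (1 / real s) *\<^sub>R outer (kvec \<kappa> xs x') (kvec \<kappa> xs x'))"
proof -
  define M where "M = density lborel (\<lambda>v. ennreal (p v))"
  interpret prob_space M
    unfolding M_def by (rule p_prob)
  have [measurable]: "\<psi> x \<in> borel_measurable M" for x
    using psi_meas unfolding M_def by simp
  have psi_square_bound: "AE v in M. (\<psi> x v)\<^sup>2 \<le> b" for x
    using bound unfolding M_def by simp
  have kernel_expectation: "\<kappa> x y = (\<integral>v. \<psi> x v * \<psi> y v \<partial>M)" for x y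
    using kernel p_meas p_nonneg psi_meas unfolding M_def
    by (subst integral_real_density) (auto simp: ac_simps intro: borel_measurable_times)
  have weighted_square_bound: "AE v in M. (\<psi> x v * \<psi> x' v)\<^sup>2 \<le> b * b" for x
    using psi_square_bound[of x] psi_square_bound[of x']
    by eventually_elim (use b_pos in \<open>auto simp: power_mult_distrib intro!: mult_mono\<close>)
  have psi_integrable: "integrable M (\<lambda>v. \<psi> x v * \<psi> y v)" for x y
    using psi_square_bound by (intro integrable_mult_of_AE_square_le) measurable
  have weighted_integrable: "integrable M (\<lambda>v. \<psi> x v * \<psi> x' v * (\<psi> y v * \<psi> x' v))" for x y
    using weighted_square_bound by (intro integrable_mult_of_AE_square_le) measurable
  have "loewner_le (\<chi> i j. \<integral>v. \<psi> (xs i) v * \<psi> x' v * (\<psi> (xs j) v * \<psi> x' v) \<partial>M) (b *\<^sub>R gram_mat \<kappa> xs)"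
    using loewner_le_second_moments[where u = "\<lambda>i. \<psi> (xs i)" and w = "\<psi> x'" and M = M]
      psi_integrable weighted_integrable psi_square_bound
    by (simp add: gram_mat_def kernel_expectation)
  then have "loewner_le
      ((1 / real s) *\<^sub>R ((\<chi> i j. \<integral>v. \<psi> (xs i) v * \<psi> x' v * (\<psi> (xs j) v * \<psi> x' v) \<partial>M)
                          - outer (kvec \<kappa> xs x') (kvec \<kappa> xs x')))
      ((1 / real s) *\<^sub>R (b *\<^sub>R gram_mat \<kappa> xs - outer (kvec \<kappa> xs x') (kvec \<kappa> xs x')))"
    by (rule loewner_le_scaleR_diff) simp
  then show ?thesis
    unfolding M_def[symmetric] rf_kvec_deviation_second_moment[where \<psi> = \<psi> and xs = xs and x' = x',
        OF prob_space_axioms s_pos kernel_expectation psi_integrable weighted_integrable]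
    by (simp add: scaleR_diff_right)
qed

end
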